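(* Let $(G,\vdash,\dashv)$ be a dimonoid. Then an element $e\in G$ is a left neutral element for $(G,\vdash)$ (i.e. $e\vdash x=x$ for all $x\in G$) if and only if it is a right neutral element for $(G,\dashv)$ (i.e. $x\dashv e=x$ for all $x\in G$).
   Context: A disemigroup $(G,\vdash,\dashv)$ is a set with two binary operations such that (G1) $(G,\vdash)$ and $(G,\dashv)$ are semigroups; (G2) $x\vdash(y\dashv z)=(x\vdash y)\dashv z$; (G3) $x\dashv(y\vdash z)=x\dashv(y\dashv z)$; (G4) $(x\dashv y)\vdash z=(x\vdash y)\vdash z$ for all $x,y,z$. A dimonoid is a disemigroup with (G5) some $1\in G$ with $1\vdash x=x\dashv 1=x$ for all $x$. A digroup is a dimonoid with a fixed such $1$ satisfying (G6): for every $x$ there is $x^{-1}$ with $x\vdash x^{-1}=x^{-1}\dashv x=1$. *)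

theory Defs
  imports Main
begin

text \<open>A disemigroup on the whole type 'a, with operations l (for the left-pointing
  product, written as turnstile) and r (for the right-pointing product, dashv).\<close>
definition disemigroup :: "('a \<Rightarrow> 'a \<Rightarrow> 'a) \<Rightarrow> ('a \<Rightarrow> 'a \<Rightarrow> 'a) \<Rightarrow> bool" where
  "disemigroup l r \<longleftrightarrow>
     (\<forall>x y z. l (l x y) z = l x (l y z)) \<and>
     (\<forall>x y z. r (r x y) z = r x (r y z)) \<and>
     (\<forall>x y z. l x (r y z) = r (l x y) z) \<and>
     (\<forall>x y z. r x (l y z) = r x (r y z)) \<and>
     (\<forall>x y z. l (r x y) z = l (l x y) z)"

definition dimonoid :: "('a \<Rightarrow> 'a \<Rightarrow> 'a) \<Rightarrow> ('a \<Rightarrow> 'a \<Rightarrow> 'a) \<Rightarrow> bool" where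
  "dimonoid l r \<longleftrightarrow> disemigroup l r \<and> (\<exists>u. \<forall>x. l u x = x \<and> r x u = x)"

end

theory Submission
  imports Defs
begin

lemma right_neutral_if_left_neutral:
  assumes G3: "\<And>x y z. r x (l y z) = r x (r y z)"
    and u_right_neutral: "\<And>x. r x u = x"
    and e_left_neutral: "\<And>x. l e x = x"
  shows "r x e = x"
proof -
  have "r x e = r x (r e u)" by (simp add: u_right_neutral)
  also have "\<dots> = r x (l e u)" by (simp add: G3)
  also have "\<dots> = x" by (simp add: e_left_neutral u_right_neutral)
  finally show ?thesis .
qed

lemma left_neutral_if_right_neutral:
  assumes G4: "\<And>x y z. l (r x y) z = l (l x y) z"
    and u_left_neutral: "\<And>x. l u x = x"
    and e_right_neutral: "\<And>x. r x e = x"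
  shows "l e x = x"
proof -
  have "l e x = l (l u e) x" by (simp add: u_left_neutral)
  also have "\<dots> = l (r u e) x" by (simp add: G4)
  also have "\<dots> = x" by (simp add: e_right_neutral u_left_neutral)
  finally show ?thesis .
qed

theorem lemma4p4:
  fixes l r :: "'a \<Rightarrow> 'a \<Rightarrow> 'a" and e :: 'a
  assumes "dimonoid l r"
  shows "(\<forall>x. l e x = x) \<longleftrightarrow> (\<forall>x. r x e = x)"
proof -
  obtain u where u_left_neutral: "\<And>x. l u x = x" and u_right_neutral: "\<And>x. r x u = x"
    using assms unfolding dimonoid_def by blast
  have G3: "\<And>x y z. r x (l y z) = r x (r y z)"
    and G4: "\<And>x y z. l (r x y) z = l (l x y) z"
    using assms unfolding dimonoid_def disemigroup_def by blast+
  show ?thesis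
    using right_neutral_if_left_neutral [of r l u e, OF G3 u_right_neutral]
      left_neutral_if_right_neutral [of l r u e, OF G4 u_left_neutral]
    by blast
qed

end
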